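(* Let $X$ be a complex Banach space and $A\in B(X)$. Then $A$ is Koliha–Drazin invertible if and only if there exists $T\in B(X)$ with $\mathcal{R}(T)=K(A)$ and $\mathcal{N}(T)=H_0(A)$ such that $A$ is Mary invertible along $T$. Moreover, if $A$ is Mary invertible along some $T\in B(X)$ with $\mathcal{R}(T)=K(A)$ and $\mathcal{N}(T)=H_0(A)$, then $A$ is Koliha–Drazin invertible and the Mary inverse of $A$ along $T$ equals the Koliha–Drazin inverse of $A$.
   Context: $\mathcal{R},\mathcal{N}$ denote range and nullspace. $A$ is Mary invertible along $T$ with Mary inverse $B\in B(X)$ if $BAB=B$ and there exist $L,U,V,W\in B(X)$ with $B=TU$, $T=BW$, $B=LT$, $T=VB$. The quasinilpotent part of $A$ is $H_0(A)=\{x\in X:\lim_{n\to\infty}\|A^nx\|^{1/n}=0\}$. The analytical core $K(A)$ is the set of $x\in X$ for which there exist a sequence $(u_n)_{n\ge0}\subset X$ and $c>0$ with $u_0=x$, $Au_{n+1}=u_n$ and $\|u_n\|\le c^n\|x\|$ for all $n\ge0$. $A$ is Koliha–Drazin invertible if there exists $C\in B(X)$ with $CAC=C$, $AC=CA$, and $A(I-AC)$ quasinilpotent (spectrum $\{0\}$); such $C$ is unique and called the Koliha–Drazin inverse. *)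

theory Defs
  imports "HOL-Analysis.Analysis"
begin

class complex_banach = banach +
  fixes scaleC :: "complex \<Rightarrow> 'a \<Rightarrow> 'a" (infixr "*\<^sub>C" 75)
  assumes scaleC_add_right: "a *\<^sub>C (x + y) = a *\<^sub>C x + a *\<^sub>C y"
    and scaleC_add_left: "(a + b) *\<^sub>C x = a *\<^sub>C x + b *\<^sub>C x"
    and scaleC_scaleC: "a *\<^sub>C (b *\<^sub>C x) = (a * b) *\<^sub>C x"
    and scaleC_one: "1 *\<^sub>C x = x"
    and scaleR_scaleC: "scaleR r x = (complex_of_real r) *\<^sub>C x"
    and norm_scaleC: "norm (a *\<^sub>C x) = cmod a * norm x"

text \<open>Elements of B(X): bounded complex-linear operators.\<close>
definition bclin :: "('a::complex_banach \<Rightarrow> 'a) \<Rightarrow> bool" where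
  "bclin A \<longleftrightarrow> bounded_linear A \<and> (\<forall>c x. A (c *\<^sub>C x) = c *\<^sub>C A x)"

definition op_invertible :: "('a::complex_banach \<Rightarrow> 'a) \<Rightarrow> bool" where
  "op_invertible A \<longleftrightarrow> (\<exists>B. bclin B \<and> A \<circ> B = id \<and> B \<circ> A = id)"

definition op_spectrum :: "('a::complex_banach \<Rightarrow> 'a) \<Rightarrow> complex set" where
  "op_spectrum A = {z. \<not> op_invertible (\<lambda>x. z *\<^sub>C x - A x)}"

definition quasinilpotent :: "('a::complex_banach \<Rightarrow> 'a) \<Rightarrow> bool" where
  "quasinilpotent A \<longleftrightarrow> op_spectrum A \<subseteq> {0}"

definition KD_inverse :: "('a::complex_banach \<Rightarrow> 'a) \<Rightarrow> ('a \<Rightarrow> 'a) \<Rightarrow> bool" where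
  "KD_inverse A C \<longleftrightarrow> bclin C \<and> C \<circ> A \<circ> C = C \<and> A \<circ> C = C \<circ> A
     \<and> quasinilpotent (\<lambda>x. A (x - A (C x)))"

definition KD_invertible :: "('a::complex_banach \<Rightarrow> 'a) \<Rightarrow> bool" where
  "KD_invertible A \<longleftrightarrow> (\<exists>C. KD_inverse A C)"

definition KD_inv :: "('a::complex_banach \<Rightarrow> 'a) \<Rightarrow> ('a \<Rightarrow> 'a)" where
  "KD_inv A = (THE C. KD_inverse A C)"

definition mary_inverse_along :: "('a::complex_banach \<Rightarrow> 'a) \<Rightarrow> ('a \<Rightarrow> 'a) \<Rightarrow> ('a \<Rightarrow> 'a) \<Rightarrow> bool" where
  "mary_inverse_along A T B \<longleftrightarrow> bclin B \<and> B \<circ> A \<circ> B = B \<and>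
     (\<exists>L U V W. bclin L \<and> bclin U \<and> bclin V \<and> bclin W \<and>
        B = T \<circ> U \<and> T = B \<circ> W \<and> B = L \<circ> T \<and> T = V \<circ> B)"

definition quasinilpotent_part :: "('a::complex_banach \<Rightarrow> 'a) \<Rightarrow> 'a set" where
  "quasinilpotent_part A = {x. (\<lambda>n. norm ((A ^^ n) x) powr (1 / real n)) \<longlonglongrightarrow> 0}"

definition analytical_core :: "('a::complex_banach \<Rightarrow> 'a) \<Rightarrow> 'a set" where
  "analytical_core A = {x. \<exists>u c. c > (0::real) \<and> u 0 = x \<and> (\<forall>n. A (u (Suc n)) = u n)
      \<and> (\<forall>n. norm (u n) \<le> c ^ n * norm x)}"

end

theory Submission
  imports Defs
begin

text \<open>A Koliha--Drazin inverse \<open>C\<close> of \<open>A\<close> makes \<open>A C\<close> the spectral idempotent whose range is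
  \<open>K(A)\<close> and whose kernel is \<open>H\<^sub>0(A)\<close>, and \<open>C\<close> is then its own Mary inverse along \<open>A C\<close>.
  Conversely, a Mary inverse \<open>B\<close> along \<open>T\<close> has the range and kernel of \<open>T\<close>; since \<open>A\<close> maps
  \<open>K(A)\<close> into itself and \<open>A v \<in> H\<^sub>0(A) \<longleftrightarrow> v \<in> H\<^sub>0(A)\<close>, the idempotents \<open>A B\<close> and \<open>B A\<close> have
  the same kernel and range, hence coincide. For \<open>z \<noteq> 0\<close> the operator \<open>z - A (I - A B)\<close> is
  inverted by a Neumann series on the range of \<open>I - A B\<close>, which lies in \<open>H\<^sub>0(A)\<close>; the uniform
  boundedness principle turns the pointwise decay there into a uniform one.

  The analytic input is that a quasinilpotent \<open>Q\<close> satisfies \<open>\<parallel>Q\<^sup>N\<parallel> \<le> r\<^sup>N\<close> for all large \<open>N\<close>,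
  for every \<open>r > 0\<close>. Without the spectral radius formula this is obtained from the resolvent
  \<open>R(\<mu>) = (I - \<mu> x)\<^sup>-\<^sup>1\<close> of \<open>x = Q/r\<close> on the closed unit disc: averaging \<open>R\<close> over \<open>N\<close>-th roots of
  unity inverts \<open>I - t\<^sup>N x\<^sup>N\<close>, and a continuity argument in \<open>t \<in> [0,1]\<close> shows that this inverse
  stays close to \<open>I\<close>, which bounds \<open>\<parallel>x\<^sup>N\<parallel>\<close>.\<close>

section \<open>Bounded operators\<close>

lemma scaleC_zero_left [simp]: "(0::complex) *\<^sub>C x = 0"
  by (metis scaleR_scaleC scaleR_zero_left of_real_0)

lemma scaleC_zero_right [simp]: "c *\<^sub>C (0::'a::complex_banach) = 0"
proof -
  have "c *\<^sub>C (0::'a) = c *\<^sub>C 0 + c *\<^sub>C 0" by (metis scaleC_add_right add_0)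
  thus ?thesis by simp
qed

declare scaleC_one [simp]

lemma scaleC_minus_right: "c *\<^sub>C (- x) = - (c *\<^sub>C (x::'a::complex_banach))"
  by (metis add.right_inverse add_eq_0_iff scaleC_add_right scaleC_zero_right)

lemma scaleC_diff_right: "c *\<^sub>C (x - y) = c *\<^sub>C x - c *\<^sub>C (y::'a::complex_banach)"
  by (metis diff_conv_add_uminus scaleC_add_right scaleC_minus_right)

lemma scaleC_minus_left: "(- c) *\<^sub>C x = - (c *\<^sub>C (x::'a::complex_banach))"
  by (metis add.right_inverse add_eq_0_iff scaleC_add_left scaleC_zero_left)

lemma scaleC_diff_left: "(a - b) *\<^sub>C x = a *\<^sub>C x - b *\<^sub>C (x::'a::complex_banach)"
  by (metis diff_conv_add_uminus scaleC_add_left scaleC_minus_left)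

lemma scaleC_scaleR_commute: "c *\<^sub>C (r *\<^sub>R x) = r *\<^sub>R (c *\<^sub>C (x::'a::complex_banach))"
  by (simp add: scaleR_scaleC scaleC_scaleC mult.commute)

lemma scaleC_of_real: "complex_of_real r *\<^sub>C x = r *\<^sub>R (x::'a::complex_banach)"
  by (simp add: scaleR_scaleC)

lemma scaleC_sum_left: "(\<Sum>i\<in>S. f i) *\<^sub>C (x::'a::complex_banach) = (\<Sum>i\<in>S. f i *\<^sub>C x)"
  by (induction S rule: infinite_finite_induct) (auto simp: scaleC_add_left)

lemma bounded_linear_scaleC: "bounded_linear (\<lambda>x::'a::complex_banach. c *\<^sub>C x)"
  by (rule bounded_linear_intro[where K="cmod c"])
     (auto simp: scaleC_add_right scaleC_scaleR_commute norm_scaleC)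

lemma bclin_bounded_linear: "bclin A \<Longrightarrow> bounded_linear A"
  by (simp add: bclin_def)

lemma bclin_scaleC: "bclin A \<Longrightarrow> A (c *\<^sub>C x) = c *\<^sub>C A x"
  by (simp add: bclin_def)

lemma bclin_add: "bclin A \<Longrightarrow> A (x + y) = A x + A y"
  by (simp add: bclin_def linear_add bounded_linear.linear)

lemma bclin_diff: "bclin A \<Longrightarrow> A (x - y) = A x - A y"
  by (simp add: bclin_def linear_diff bounded_linear.linear)

lemma bclin_zero: "bclin A \<Longrightarrow> A 0 = 0"
  by (simp add: bclin_def linear_0 bounded_linear.linear)

lemma bclin_scaleR: "bclin A \<Longrightarrow> A (r *\<^sub>R x) = r *\<^sub>R A x"
  by (simp add: bclin_def linear_scale bounded_linear.linear)

lemma bclin_sum: "bclin A \<Longrightarrow> A (\<Sum>i\<in>S. f i) = (\<Sum>i\<in>S. A (f i))"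
  by (simp add: bclin_def linear_sum bounded_linear.linear)

lemma bclin_norm_le: "bclin A \<Longrightarrow> norm (A x) \<le> onorm A * norm x"
  by (simp add: bclin_def onorm)

lemma bclin_onorm_nonneg: "bclin A \<Longrightarrow> 0 \<le> onorm A"
  by (simp add: bclin_def onorm_pos_le)

lemma bclin_ident: "bclin (\<lambda>x. x)"
  by (simp add: bclin_def bounded_linear_ident)

lemma bclin_compose: "bclin A \<Longrightarrow> bclin B \<Longrightarrow> bclin (\<lambda>x. A (B x))"
  by (simp add: bclin_def bounded_linear_compose)

lemma bclin_comp: "bclin A \<Longrightarrow> bclin B \<Longrightarrow> bclin (A \<circ> B)"
  by (simp add: o_def bclin_compose)

lemma bclin_funpow: "bclin A \<Longrightarrow> bclin (A ^^ n)"
  by (induction n) (auto simp: id_def bclin_ident bclin_comp)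

lemma bclin_diff_fun: "bclin A \<Longrightarrow> bclin B \<Longrightarrow> bclin (\<lambda>x. A x - B x)"
  by (simp add: bclin_def bounded_linear_sub scaleC_diff_right)

lemma bclin_add_fun: "bclin A \<Longrightarrow> bclin B \<Longrightarrow> bclin (\<lambda>x. A x + B x)"
  by (simp add: bclin_def bounded_linear_add scaleC_add_right)

lemma bclin_scaleC_fun: "bclin A \<Longrightarrow> bclin (\<lambda>x. c *\<^sub>C A x)"
  by (auto simp add: bclin_def scaleC_scaleC mult.commute
      intro: bounded_linear_compose[OF bounded_linear_scaleC])

lemma bclin_scaleR_fun: "bclin A \<Longrightarrow> bclin (\<lambda>x. r *\<^sub>R A x)"
  by (auto simp add: bclin_def scaleC_scaleR_commute
      intro: bounded_linear_compose[OF bounded_linear_scaleR_right])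

lemma bclin_sum_fun: "(\<And>i. i \<in> S \<Longrightarrow> bclin (F i)) \<Longrightarrow> bclin (\<lambda>x. \<Sum>i\<in>S. F i x)"
  by (induction S rule: infinite_finite_induct)
     (auto simp: bclin_def bounded_linear_add scaleC_add_right intro: bounded_linear_zero)

lemma norm_funpow_le: "bclin A \<Longrightarrow> norm ((A ^^ n) x) \<le> onorm A ^ n * norm x"
proof (induction n)
  case (Suc n)
  have "norm ((A ^^ Suc n) x) \<le> onorm A * norm ((A ^^ n) x)"
    using Suc bclin_norm_le by simp
  also have "\<dots> \<le> onorm A * (onorm A ^ n * norm x)"
    using Suc by (intro mult_left_mono) (auto simp: bclin_onorm_nonneg)
  finally show ?case by (simp add: mult.assoc)
qed simp

lemma funpow_commute: "(\<And>v. A (B v) = B (A v)) \<Longrightarrow> A ((B ^^ n) v) = (B ^^ n) (A v)"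
  by (induction n) auto

lemma norm_funpow_le_max_onorm: "bclin C \<Longrightarrow> norm ((C ^^ n) v) \<le> max (onorm C) 1 ^ n * norm v"
  by (rule order_trans[OF norm_funpow_le]) (auto intro!: mult_right_mono power_mono bclin_onorm_nonneg)

lemma abs_onorm_diff_le:
  assumes "bounded_linear f" "bounded_linear g"
  shows "\<bar>onorm f - onorm g\<bar> \<le> onorm (\<lambda>v. f v - g v)"
proof -
  have "onorm f \<le> onorm g + onorm (\<lambda>v. f v - g v)"
    using onorm_triangle[OF bounded_linear_sub[OF assms] assms(2)] by simp
  moreover have "onorm g \<le> onorm f + onorm (\<lambda>v. g v - f v)"
    using onorm_triangle[OF bounded_linear_sub[OF assms(2,1)] assms(1)] by simp
  moreover have "onorm (\<lambda>v. g v - f v) = onorm (\<lambda>v. f v - g v)"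
    using onorm_neg[of "\<lambda>v. f v - g v"] by simp
  ultimately show ?thesis by (simp add: abs_le_iff)
qed

lemma nonpos_if_eventually_le_half_power:
  fixes a K :: real
  assumes "\<forall>n\<ge>N. a \<le> K * (1/2) ^ n"
  shows "a \<le> 0"
proof -
  have "(\<lambda>n. K * (1/2::real) ^ n) \<longlonglongrightarrow> K * 0"
    by (intro tendsto_mult tendsto_const LIMSEQ_power_zero) simp
  thus ?thesis using assms by (intro LIMSEQ_le_const[of "\<lambda>n. K * (1/2) ^ n"]) auto
qed

lemma norm_le_of_bounded_on_ball:
  assumes bl: "bounded_linear f" and e: "0 < e" and ball: "\<And>w. w \<in> ball v0 e \<Longrightarrow> norm (f w) \<le> k"
  shows "norm (f v) \<le> 4 * k / e * norm v"
proof (cases "v = 0")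
  case True then show ?thesis using bl by (simp add: linear_simps)
next
  case False
  define w where "w = (e / (2 * norm v)) *\<^sub>R v"
  have "norm w = e / 2" using False e by (simp add: w_def)
  hence "norm (f (v0 + w)) \<le> k" "norm (f v0) \<le> k" using ball e by (auto simp: dist_norm)
  moreover have "f w = f (v0 + w) - f v0" using bl by (simp add: linear_simps)
  ultimately have "norm (f w) \<le> 2 * k" using norm_triangle_ineq4[of "f (v0 + w)" "f v0"] by simp
  moreover have "f w = (e / (2 * norm v)) *\<^sub>R f v" using bl by (simp add: w_def linear_simps)
  ultimately have "(e / (2 * norm v)) * norm (f v) \<le> 2 * k" using e by simp
  thus ?thesis using e False by (simp add: field_simps)
qed

lemma uniform_boundedness:
  fixes T :: "nat \<Rightarrow> 'a::banach \<Rightarrow> 'b::real_normed_vector"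
  assumes bl: "\<And>n. bounded_linear (T n)" and pointwise: "\<And>v. \<exists>K. \<forall>n. norm (T n v) \<le> K"
  shows "\<exists>C. \<forall>n v. norm (T n v) \<le> C * norm v"
proof -
  define F where "F k = {v. \<forall>n. norm (T n v) \<le> real k}" for k :: nat
  have closed_F: "closed (F k)" for k
  proof -
    have "closed {v. norm (T n v) \<le> real k}" for n
      by (rule closed_Collect_le[OF continuous_on_norm[OF linear_continuous_on[OF bl]] continuous_on_const])
    moreover have "F k = (\<Inter>n. {v. norm (T n v) \<le> real k})" by (auto simp: F_def)
    ultimately show ?thesis by auto
  qed
  have cover: "\<Union>(range F) = UNIV"
  proof -
    have "v \<in> \<Union>(range F)" for v
    proof -
      obtain K where K: "\<forall>n. norm (T n v) \<le> K" using pointwise by blast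
      obtain k :: nat where "K \<le> real k" using real_arch_simple by blast
      hence "v \<in> F k" using K by (auto simp: F_def intro: order_trans)
      thus ?thesis by blast
    qed
    thus ?thesis by auto
  qed
  have "\<exists>k. interior (F k) \<noteq> {}"
  proof (rule ccontr)
    assume "\<not> (\<exists>k. interior (F k) \<noteq> {})"
    hence "euclidean interior_of \<Union>(range F) = {}"
      using closed_F completely_metrizable_space_euclidean
      by (intro Baire_category_alt) (auto simp: closed_closedin[symmetric])
    thus False using cover by simp
  qed
  then obtain k v0 e where e: "0 < e" and ball: "ball v0 e \<subseteq> F k"
    by (meson all_not_in_conv interior_subset openE open_interior order_trans)
  have "norm (T n v) \<le> 4 * real k / e * norm v" for n v
    using ball by (intro norm_le_of_bounded_on_ball[OF bl e]) (auto simp: F_def)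
  thus ?thesis by blast
qed

lemma idempotents_eqI:
  assumes "linear E" "linear F" "\<And>v. E (E v) = E v" "\<And>v. F (F v) = F v"
    and kernel: "\<And>v. E v = 0 \<longleftrightarrow> F v = 0" and "range E \<subseteq> range F"
  shows "E v = F v"
proof -
  obtain w where w: "E v = F w" using \<open>range E \<subseteq> range F\<close> by blast
  have "E (v - E v) = 0" using assms(1,3) by (simp add: linear_diff)
  hence "F (v - E v) = 0" using kernel by blast
  hence "F v = F (E v)" using assms(2) by (simp add: linear_diff)
  thus ?thesis using w assms(4) by simp
qed

section \<open>Power decay of quasinilpotent operators\<close>

definition unit_root :: "nat \<Rightarrow> complex" where
  "unit_root N = cis (2 * pi / real N)"

lemma unit_root_power: "unit_root N ^ j = cis (real j * (2 * pi / real N))"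
  unfolding unit_root_def by (rule Complex.DeMoivre)

lemma norm_unit_root_power [simp]: "cmod (unit_root N ^ k) = 1"
  by (simp add: unit_root_power)

lemma unit_root_power_power_N: "N > 0 \<Longrightarrow> (unit_root N ^ k) ^ N = 1"
proof -
  assume N: "N > 0"
  have "(unit_root N ^ k) ^ N = cis (real N * (real k * (2 * pi / real N)))"
    by (simp only: unit_root_power Complex.DeMoivre)
  also have "real N * (real k * (2 * pi / real N)) = 2 * pi * real k" using N by simp
  finally show ?thesis by (simp add: cis_multiple_2pi)
qed

lemma sum_unit_root_powers:
  assumes "0 < j" "j < N"
  shows "(\<Sum>k<N. (unit_root N ^ k) ^ j) = 0"
proof -
  define q where "q = unit_root N ^ j"
  have powers: "(unit_root N ^ k) ^ j = q ^ k" for k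
    by (simp add: q_def power_mult[symmetric] mult.commute)
  have qN: "q ^ N = 1"
    using unit_root_power_power_N[of N j] assms by (simp add: q_def power_mult[symmetric] mult.commute)
  have "q \<noteq> 1"
  proof
    assume "q = 1"
    hence "cos (real j * (2 * pi / real N)) = 1"
      by (simp add: q_def unit_root_power cis.code complex_eq_iff)
    then obtain n :: int where "real j * (2 * pi / real N) = real_of_int n * 2 * pi"
      using cos_one_2pi_int by blast
    hence "real j / real N = n" using assms by (simp add: field_simps)
    moreover have "0 < real j / real N" "real j / real N < 1" using assms by auto
    ultimately show False by simp
  qed
  hence "(\<Sum>k<N. q ^ k) = (q ^ N - 1) / (q - 1)" by (rule geometric_sum)
  thus ?thesis by (simp add: powers qN)
qed

lemma one_minus_inverse_power_le_half: "1 \<le> N \<Longrightarrow> (1 - 1 / real N) ^ N \<le> 1 / 2"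
proof -
  assume N: "1 \<le> N"
  have "(1 - 1 / real N) ^ N \<le> exp (- 1 / real N) ^ N"
    using N exp_ge_add_one_self[of "- 1 / real N"] by (intro power_mono) (auto simp: field_simps)
  also have "\<dots> = exp (- 1)" using N by (simp flip: exp_of_nat_mult)
  also have "\<dots> \<le> 1 / 2"
    using exp_ge_add_one_self[of "1::real"] by (simp add: exp_minus field_simps)
  finally show ?thesis .
qed

text \<open>The inequality \<open>d \<le> d\<^sup>2 + \<delta>\<close> leaves no room for values of \<open>d\<close> in \<open>(2\<delta>, 1/2]\<close>, so a
  continuous \<open>d\<close> starting at \<open>0\<close> stays below \<open>2\<delta>\<close>.\<close>

lemma continuous_quadratic_gap:
  fixes d :: "real \<Rightarrow> real"
  assumes cont: "continuous_on {0..1} d" and "d 0 = 0" "0 \<le> \<delta>" "\<delta> \<le> 1/8"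
    and quadratic: "\<And>t. t \<in> {0..1} \<Longrightarrow> d t \<le> d t * d t + \<delta>"
  shows "d 1 \<le> 2 * \<delta>"
proof (rule ccontr)
  assume "\<not> d 1 \<le> 2 * \<delta>"
  define y where "y = min (d 1) (1/2)"
  have y: "2 * \<delta> < y" "y \<le> 1/2" using \<open>\<not> d 1 \<le> 2 * \<delta>\<close> assms(4) by (auto simp: y_def)
  obtain t where t: "t \<in> {0..1}" "d t = y"
    using IVT'[OF _ _ _ cont, of y] assms(2,3) y by (auto simp: y_def)
  have "y \<le> y * y + \<delta>" using quadratic[OF t(1)] t(2) by simp
  moreover have "y * y \<le> y * (1/2)" using y assms(3) by (intro mult_left_mono) auto
  ultimately show False using y by linarith
qed

locale disc_resolvent =
  fixes x :: "'a::complex_banach \<Rightarrow> 'a" and R :: "complex \<Rightarrow> 'a \<Rightarrow> 'a"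
  assumes bclin_x: "bclin x"
    and bclin_R: "cmod \<mu> \<le> 1 \<Longrightarrow> bclin (R \<mu>)"
    and R_right_inverse: "cmod \<mu> \<le> 1 \<Longrightarrow> R \<mu> v - \<mu> *\<^sub>C x (R \<mu> v) = v"
    and R_left_inverse: "cmod \<mu> \<le> 1 \<Longrightarrow> R \<mu> (v - \<mu> *\<^sub>C x v) = v"
begin

lemma R_zero: "R 0 v = v"
  using R_left_inverse[of 0 v] by simp

lemma resolvent_identity:
  assumes "cmod \<mu> \<le> 1" "cmod \<nu> \<le> 1"
  shows "R \<mu> v - R \<nu> v = (\<mu> - \<nu>) *\<^sub>C R \<nu> (x (R \<mu> v))"
proof -
  define w where "w = R \<mu> v"
  have "w - \<nu> *\<^sub>C x w = v + (\<mu> - \<nu>) *\<^sub>C x w"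
    using R_right_inverse[OF assms(1), of v] by (simp add: w_def scaleC_diff_left algebra_simps)
  hence "w = R \<nu> (v + (\<mu> - \<nu>) *\<^sub>C x w)" using R_left_inverse[OF assms(2), of w] by simp
  also have "\<dots> = R \<nu> v + (\<mu> - \<nu>) *\<^sub>C R \<nu> (x w)"
    using bclin_R[OF assms(2)] by (simp add: bclin_add bclin_scaleC)
  finally show ?thesis by (simp add: w_def algebra_simps)
qed

lemma norm_R_diff_le:
  assumes "cmod \<mu> \<le> 1" "cmod \<nu> \<le> 1"
  shows "norm (R \<mu> v - R \<nu> v) \<le> cmod (\<mu> - \<nu>) * onorm (R \<nu>) * onorm x * norm (R \<mu> v)"
proof -
  have "norm (R \<nu> (x (R \<mu> v))) \<le> onorm (R \<nu>) * norm (x (R \<mu> v))"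
    using bclin_R[OF assms(2)] bclin_norm_le by blast
  also have "\<dots> \<le> onorm (R \<nu>) * (onorm x * norm (R \<mu> v))"
    using bclin_x bclin_R[OF assms(2)] by (intro mult_left_mono bclin_norm_le bclin_onorm_nonneg)
  finally show ?thesis
    by (simp add: resolvent_identity[OF assms] norm_scaleC mult.assoc mult_left_mono)
qed

lemma norm_R_le_near:
  assumes "cmod \<mu> \<le> 1" "cmod \<nu> \<le> 1" "cmod (\<mu> - \<nu>) * onorm (R \<nu>) * onorm x \<le> 1/2"
  shows "norm (R \<mu> v) \<le> 2 * onorm (R \<nu>) * norm v"
proof -
  have "norm (R \<mu> v) \<le> norm (R \<nu> v) + norm (R \<mu> v - R \<nu> v)"
    by (metis add.commute diff_add_cancel norm_triangle_ineq)
  also have "\<dots> \<le> onorm (R \<nu>) * norm v + 1/2 * norm (R \<mu> v)"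
  proof (intro add_mono)
    show "norm (R \<nu> v) \<le> onorm (R \<nu>) * norm v"
      using bclin_R[OF assms(2)] bclin_norm_le by blast
    show "norm (R \<mu> v - R \<nu> v) \<le> 1 / 2 * norm (R \<mu> v)"
      using norm_R_diff_le[OF assms(1,2), of v] assms(3)
      by (meson mult_right_mono norm_ge_zero order_trans)
  qed
  finally show ?thesis by simp
qed

lemma onorm_R_diff_le:
  assumes "cmod \<mu> \<le> 1" "cmod \<nu> \<le> 1" "cmod (\<mu> - \<nu>) * onorm (R \<nu>) * onorm x \<le> 1/2"
  shows "onorm (\<lambda>v. R \<mu> v - R \<nu> v) \<le> cmod (\<mu> - \<nu>) * (2 * onorm (R \<nu>) ^ 2 * onorm x)"
proof (rule onorm_bound)
  have "0 \<le> onorm (R \<nu>)" "0 \<le> onorm x"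
    using bclin_R[OF assms(2)] bclin_x by (auto intro: bclin_onorm_nonneg)
  thus "0 \<le> cmod (\<mu> - \<nu>) * (2 * onorm (R \<nu>) ^ 2 * onorm x)" by simp
  fix v
  have "norm (R \<mu> v - R \<nu> v) \<le> cmod (\<mu> - \<nu>) * onorm (R \<nu>) * onorm x * norm (R \<mu> v)"
    by (rule norm_R_diff_le[OF assms(1,2)])
  also have "\<dots> \<le> cmod (\<mu> - \<nu>) * onorm (R \<nu>) * onorm x * (2 * onorm (R \<nu>) * norm v)"
    using norm_R_le_near[OF assms] \<open>0 \<le> onorm (R \<nu>)\<close> \<open>0 \<le> onorm x\<close>
    by (intro mult_left_mono) auto
  finally show "norm (R \<mu> v - R \<nu> v) \<le> cmod (\<mu> - \<nu>) * (2 * onorm (R \<nu>) ^ 2 * onorm x) * norm v"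
    by (simp add: power2_eq_square algebra_simps)
qed

lemma continuous_on_onorm_R: "continuous_on (cball 0 1) (\<lambda>\<mu>. onorm (R \<mu>))"
  unfolding continuous_on_iff
proof (intro ballI allI impI)
  fix \<nu> :: complex and e :: real
  assume \<nu>: "\<nu> \<in> cball 0 1" and e: "0 < e"
  define a where "a = onorm (R \<nu>) * onorm x"
  define b where "b = 2 * onorm (R \<nu>) ^ 2 * onorm x"
  have "0 \<le> onorm (R \<nu>)" "0 \<le> onorm x"
    using bclin_R \<nu> bclin_x by (auto intro: bclin_onorm_nonneg)
  hence a: "0 \<le> a" and b: "0 \<le> b" by (simp_all add: a_def b_def)
  show "\<exists>d>0. \<forall>\<mu>\<in>cball 0 1. dist \<mu> \<nu> < d \<longrightarrow> dist (onorm (R \<mu>)) (onorm (R \<nu>)) < e"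
  proof (intro exI[of _ "min (1 / (2 * a + 1)) (e / (b + 1))"] conjI ballI impI)
    show "0 < min (1 / (2 * a + 1)) (e / (b + 1))" using a b e by simp
    fix \<mu> assume \<mu>: "\<mu> \<in> cball 0 1" and close: "dist \<mu> \<nu> < min (1 / (2 * a + 1)) (e / (b + 1))"
    have near: "cmod (\<mu> - \<nu>) * (2 * a + 1) < 1" "cmod (\<mu> - \<nu>) * (b + 1) < e"
      using close a b by (simp_all add: dist_norm field_simps)
    have "cmod (\<mu> - \<nu>) * (2 * a + 1) = 2 * (cmod (\<mu> - \<nu>) * a) + cmod (\<mu> - \<nu>)"
      by (simp add: algebra_simps)
    hence "cmod (\<mu> - \<nu>) * a \<le> 1/2" using near(1) norm_ge_zero[of "\<mu> - \<nu>"] by linarith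
    hence "cmod (\<mu> - \<nu>) * onorm (R \<nu>) * onorm x \<le> 1/2"
      by (simp add: a_def mult.assoc)
    hence "onorm (\<lambda>v. R \<mu> v - R \<nu> v) \<le> cmod (\<mu> - \<nu>) * b"
      unfolding b_def using \<mu> \<nu> by (intro onorm_R_diff_le) auto
    also have "\<dots> < e" using near b by (smt (verit) mult_left_mono norm_ge_zero)
    finally have "onorm (\<lambda>v. R \<mu> v - R \<nu> v) < e" .
    moreover have "\<bar>onorm (R \<mu>) - onorm (R \<nu>)\<bar> \<le> onorm (\<lambda>v. R \<mu> v - R \<nu> v)"
      using \<mu> \<nu> bclin_R by (intro abs_onorm_diff_le bclin_bounded_linear) auto
    ultimately show "dist (onorm (R \<mu>)) (onorm (R \<nu>)) < e" by (simp add: dist_real_def)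
  qed
qed

lemma bounded_onorm_R: "\<exists>M\<ge>1. \<forall>\<mu>. cmod \<mu> \<le> 1 \<longrightarrow> onorm (R \<mu>) \<le> M"
proof -
  have "compact ((\<lambda>\<mu>. onorm (R \<mu>)) ` cball 0 1)"
    by (intro compact_continuous_image continuous_on_onorm_R compact_cball)
  then obtain M where "\<forall>y\<in>(\<lambda>\<mu>. onorm (R \<mu>)) ` cball 0 1. norm y \<le> M"
    using compact_imp_bounded bounded_iff by blast
  hence "\<forall>\<mu>. cmod \<mu> \<le> 1 \<longrightarrow> onorm (R \<mu>) \<le> max M 1" by force
  thus ?thesis by (intro exI[of _ "max M 1"]) auto
qed

lemma R_commute: "cmod \<mu> \<le> 1 \<Longrightarrow> R \<mu> (x v) = x (R \<mu> v)"
proof -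
  assume \<mu>: "cmod \<mu> \<le> 1"
  define w where "w = R \<mu> v"
  have "v = w - \<mu> *\<^sub>C x w" using R_right_inverse[OF \<mu>, of v] by (simp add: w_def)
  hence "x v = x w - \<mu> *\<^sub>C x (x w)" using bclin_x by (simp add: bclin_diff bclin_scaleC)
  thus ?thesis using R_left_inverse[OF \<mu>, of "x w"] w_def by simp
qed

lemma R_commute_funpow: "cmod \<mu> \<le> 1 \<Longrightarrow> R \<mu> ((x ^^ n) v) = (x ^^ n) (R \<mu> v)"
  by (rule funpow_commute) (rule R_commute)

lemma geometric_telescope:
  "(\<Sum>j<N. \<mu> ^ j *\<^sub>C (x ^^ j) w) - \<mu> *\<^sub>C x (\<Sum>j<N. \<mu> ^ j *\<^sub>C (x ^^ j) w)
     = w - \<mu> ^ N *\<^sub>C (x ^^ N) w"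
proof (induction N)
  case 0 then show ?case using bclin_x by (simp add: bclin_zero)
next
  case (Suc N)
  define S where "S = (\<Sum>j<N. \<mu> ^ j *\<^sub>C (x ^^ j) w)"
  have "x (S + \<mu> ^ N *\<^sub>C (x ^^ N) w) = x S + \<mu> ^ N *\<^sub>C (x ^^ Suc N) w"
    using bclin_x by (simp add: bclin_add bclin_scaleC)
  hence "(\<Sum>j<Suc N. \<mu> ^ j *\<^sub>C (x ^^ j) w) - \<mu> *\<^sub>C x (\<Sum>j<Suc N. \<mu> ^ j *\<^sub>C (x ^^ j) w)
     = (S - \<mu> *\<^sub>C x S) + \<mu> ^ N *\<^sub>C (x ^^ N) w - \<mu> ^ Suc N *\<^sub>C (x ^^ Suc N) w"
    by (simp add: S_def scaleC_add_right scaleC_scaleC algebra_simps)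
  with Suc show ?case by (simp add: S_def)
qed

lemma R_geometric:
  "cmod \<mu> \<le> 1 \<Longrightarrow> R \<mu> (w - \<mu> ^ N *\<^sub>C (x ^^ N) w) = (\<Sum>j<N. \<mu> ^ j *\<^sub>C (x ^^ j) w)"
  unfolding geometric_telescope[symmetric] by (rule R_left_inverse)

text \<open>Averaging \<open>R\<close> over the rotated points \<open>\<omega>\<^sup>k t\<close>, \<open>\<omega>\<close> a primitive \<open>N\<close>-th root of unity, kills
  every term of the geometric series whose exponent is not a multiple of \<open>N\<close>; hence
  \<open>avg_resolvent N t\<close> is the inverse of \<open>I - t\<^sup>N x\<^sup>N\<close>.\<close>

definition avg_resolvent :: "nat \<Rightarrow> real \<Rightarrow> 'a \<Rightarrow> 'a" where
  "avg_resolvent N t v = (1 / real N) *\<^sub>R (\<Sum>k<N. R (unit_root N ^ k * complex_of_real t) v)"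

lemma cmod_unit_root_power_times_le: "0 \<le> t \<Longrightarrow> t \<le> 1 \<Longrightarrow> cmod (unit_root N ^ k * complex_of_real t) \<le> 1"
  by (simp add: norm_mult)

lemma avg_resolvent_left_inverse:
  assumes N: "0 < N" and t: "0 \<le> t" "t \<le> 1"
  shows "avg_resolvent N t (w - complex_of_real (t ^ N) *\<^sub>C (x ^^ N) w) = w"
proof -
  define c where "c j = (\<Sum>k<N. (unit_root N ^ k) ^ j) * complex_of_real t ^ j" for j
  have "(unit_root N ^ k * complex_of_real t) ^ N = complex_of_real (t ^ N)" for k
    using unit_root_power_power_N[OF N, of k] by (simp add: power_mult_distrib)
  hence "(\<Sum>k<N. R (unit_root N ^ k * complex_of_real t) (w - complex_of_real (t ^ N) *\<^sub>C (x ^^ N) w))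
      = (\<Sum>k<N. \<Sum>j<N. (unit_root N ^ k * complex_of_real t) ^ j *\<^sub>C (x ^^ j) w)"
    by (metis (no_types, lifting) R_geometric cmod_unit_root_power_times_le t sum.cong)
  also have "\<dots> = (\<Sum>j<N. c j *\<^sub>C (x ^^ j) w)"
    by (subst sum.swap) (simp add: c_def scaleC_sum_left sum_distrib_right power_mult_distrib)
  also have "\<dots> = c 0 *\<^sub>C w"
  proof -
    obtain m where m: "N = Suc m" using N not0_implies_Suc by blast
    have "c (Suc j) = 0" if "j < m" for j
      using sum_unit_root_powers[of "Suc j" N] that m by (simp add: c_def)
    thus ?thesis by (simp add: m sum.lessThan_Suc_shift del: sum.lessThan_Suc)
  qed
  finally show ?thesis using N by (simp add: c_def avg_resolvent_def scaleC_of_real[symmetric] scaleC_scaleC)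
qed

lemma bclin_avg_resolvent: "0 \<le> t \<Longrightarrow> t \<le> 1 \<Longrightarrow> bclin (avg_resolvent N t)"
  unfolding avg_resolvent_def[abs_def]
  by (intro bclin_scaleR_fun bclin_sum_fun bclin_R cmod_unit_root_power_times_le)

lemma avg_resolvent_right_inverse:
  assumes N: "0 < N" and t: "0 \<le> t" "t \<le> 1"
  shows "avg_resolvent N t w - complex_of_real (t ^ N) *\<^sub>C (x ^^ N) (avg_resolvent N t w) = w"
proof -
  have "avg_resolvent N t ((x ^^ N) v) = (x ^^ N) (avg_resolvent N t v)" for v
    using bclin_funpow[OF bclin_x, of N]
    by (simp add: avg_resolvent_def R_commute_funpow cmod_unit_root_power_times_le[OF t] bclin_scaleR bclin_sum)
  thus ?thesis using bclin_avg_resolvent[OF t] avg_resolvent_left_inverse[OF assms]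
    by (simp add: bclin_diff bclin_scaleC)
qed

lemma avg_resolvent_zero: "0 < N \<Longrightarrow> avg_resolvent N 0 v = v"
  by (simp add: avg_resolvent_def R_zero sum_constant_scaleR)

end

locale bounded_disc_resolvent = disc_resolvent +
  fixes M :: real
  assumes M_ge_1: "1 \<le> M"
    and onorm_R_le: "cmod \<mu> \<le> 1 \<Longrightarrow> onorm (R \<mu>) \<le> M"
begin

definition L :: real where "L = M * M * onorm x"

lemma L_nonneg: "0 \<le> L"
  using M_ge_1 bclin_onorm_nonneg[OF bclin_x] by (simp add: L_def)

lemma norm_R_le: "cmod \<mu> \<le> 1 \<Longrightarrow> norm (R \<mu> v) \<le> M * norm v"
  by (meson onorm_R_le bclin_R bclin_norm_le mult_right_mono norm_ge_zero order_trans)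

lemma norm_R_diff_le_L:
  assumes "cmod \<mu> \<le> 1" "cmod \<nu> \<le> 1"
  shows "norm (R \<mu> v - R \<nu> v) \<le> L * cmod (\<mu> - \<nu>) * norm v"
proof -
  have "norm (R \<mu> v - R \<nu> v) \<le> cmod (\<mu> - \<nu>) * onorm (R \<nu>) * onorm x * norm (R \<mu> v)"
    by (rule norm_R_diff_le[OF assms])
  also have "\<dots> \<le> cmod (\<mu> - \<nu>) * M * onorm x * (M * norm v)"
    using onorm_R_le[OF assms(2)] norm_R_le[OF assms(1)] bclin_onorm_nonneg[OF bclin_x]
      bclin_onorm_nonneg[OF bclin_R[OF assms(2)]]
    by (intro mult_mono) auto
  finally show ?thesis by (simp add: L_def algebra_simps)
qed

lemma norm_avg_resolvent_le:
  assumes "0 < N" "0 \<le> t" "t \<le> 1"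
  shows "norm (avg_resolvent N t v) \<le> M * norm v"
proof -
  have "norm (\<Sum>k<N. R (unit_root N ^ k * complex_of_real t) v) \<le> (\<Sum>k<N. M * norm v)"
    by (rule order_trans[OF norm_sum sum_mono]) (intro norm_R_le cmod_unit_root_power_times_le assms)
  thus ?thesis using assms by (simp add: avg_resolvent_def divide_simps mult_ac)
qed

lemma norm_avg_resolvent_diff_le:
  assumes "0 < N" "0 \<le> t" "t \<le> 1" "0 \<le> t'" "t' \<le> 1"
  shows "norm (avg_resolvent N t v - avg_resolvent N t' v) \<le> L * \<bar>t - t'\<bar> * norm v"
proof -
  have "norm (R (unit_root N ^ k * complex_of_real t) v - R (unit_root N ^ k * complex_of_real t') v)
        \<le> L * \<bar>t - t'\<bar> * norm v" for k
  proof -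
    have "cmod (unit_root N ^ k * complex_of_real t - unit_root N ^ k * complex_of_real t') = \<bar>t - t'\<bar>"
      by (simp add: right_diff_distrib[symmetric] norm_mult, metis norm_of_real of_real_diff)
    thus ?thesis
      using norm_R_diff_le_L cmod_unit_root_power_times_le assms by metis
  qed
  hence "norm (\<Sum>k<N. R (unit_root N ^ k * complex_of_real t) v - R (unit_root N ^ k * complex_of_real t') v)
     \<le> (\<Sum>k<N. L * \<bar>t - t'\<bar> * norm v)"
    by (intro order_trans[OF norm_sum sum_mono])
  moreover have "avg_resolvent N t v - avg_resolvent N t' v = (1 / real N) *\<^sub>R
      (\<Sum>k<N. R (unit_root N ^ k * complex_of_real t) v - R (unit_root N ^ k * complex_of_real t') v)"
    by (simp add: avg_resolvent_def sum_subtractf scaleR_diff_right)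
  ultimately show ?thesis using assms by (simp add: divide_simps mult_ac)
qed

lemma avg_resolvent_rescale:
  assumes N: "0 < N" and t: "0 \<le> t" "t \<le> 1" and s: "0 \<le> s" "s \<le> 1"
  shows "(1 - s ^ N) *\<^sub>R avg_resolvent N (s * t) (avg_resolvent N t v - v)
           = avg_resolvent N t v - avg_resolvent N (s * t) v"
proof -
  let ?H = "avg_resolvent N" and ?\<theta> = "s ^ N"
  define u where "u = ?H t v"
  have st: "0 \<le> s * t" "s * t \<le> 1" using t s by (auto simp: mult_le_one)
  have "u - complex_of_real (t ^ N) *\<^sub>C (x ^^ N) u = v"
    using avg_resolvent_right_inverse[OF N t] by (simp add: u_def)
  hence "complex_of_real (t ^ N) *\<^sub>C (x ^^ N) u = u - v"
    by (metis diff_diff_eq2 diff_add_cancel add_diff_cancel_left')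
  moreover have "complex_of_real ((s * t) ^ N) *\<^sub>C (x ^^ N) u
                   = ?\<theta> *\<^sub>R (complex_of_real (t ^ N) *\<^sub>C (x ^^ N) u)"
    by (simp add: power_mult_distrib scaleR_scaleC scaleC_scaleC mult.commute)
  ultimately have "complex_of_real ((s * t) ^ N) *\<^sub>C (x ^^ N) u = ?\<theta> *\<^sub>R (u - v)" by (simp only:)
  hence "u - complex_of_real ((s * t) ^ N) *\<^sub>C (x ^^ N) u = v + (1 - ?\<theta>) *\<^sub>R (u - v)"
    by (simp add: algebra_simps)
  hence "u = ?H (s * t) (v + (1 - ?\<theta>) *\<^sub>R (u - v))"
    using avg_resolvent_left_inverse[OF N st, of u] by simp
  also have "\<dots> = ?H (s * t) v + (1 - ?\<theta>) *\<^sub>R ?H (s * t) (u - v)"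
    using bclin_avg_resolvent[OF st] by (simp add: bclin_add bclin_scaleR)
  finally show ?thesis by (metis add_diff_cancel_left' u_def)
qed

text \<open>Write \<open>H\<^sub>t = avg_resolvent N t\<close> and \<open>s = 1 - 1/N\<close>, so that \<open>s\<^sup>N \<le> 1/2\<close> and
  \<open>\<bar>t - s t\<bar> \<le> 1/N\<close>. By the rescaling identity and the Lipschitz bound in \<open>t\<close>,
  \<open>H\<^sub>s\<^sub>t (H\<^sub>t v - v)\<close> is of order \<open>1/N\<close>, and so is \<open>H\<^sub>t (H\<^sub>t v - v)\<close>.\<close>

lemma avg_resolvent_nearly_idempotent:
  assumes N: "0 < N" and t: "0 \<le> t" "t \<le> 1"
  shows "norm (avg_resolvent N t (avg_resolvent N t v) - avg_resolvent N t v)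
           \<le> (M + 3) * L / real N * norm v"
proof -
  let ?H = "avg_resolvent N"
  define s where "s = 1 - 1 / real N"
  define t' where "t' = s * t"
  define u where "u = ?H t v"
  have s: "0 \<le> s" "s \<le> 1" using N by (auto simp: s_def field_simps)
  have \<theta>: "0 \<le> s ^ N" "s ^ N \<le> 1/2"
    using s one_minus_inverse_power_le_half[of N] N by (auto simp: s_def)
  have t': "0 \<le> t'" "t' \<le> 1" using t s by (auto simp: t'_def mult_le_one)
  have tt': "\<bar>t - t'\<bar> \<le> 1 / real N" using t N by (simp add: t'_def s_def field_simps)
  have "\<bar>1 - s ^ N\<bar> * norm (?H t' (u - v)) = norm (?H t v - ?H t' v)"
    using avg_resolvent_rescale[OF N t s, of v] by (metis norm_scaleR t'_def u_def)
  hence "(1 - s ^ N) * norm (?H t' (u - v)) = norm (?H t v - ?H t' v)"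
    using \<theta> by simp
  also have "\<dots> \<le> L * \<bar>t - t'\<bar> * norm v" by (rule norm_avg_resolvent_diff_le[OF N t t'])
  also have "\<dots> \<le> L * (1 / real N) * norm v"
    using tt' L_nonneg by (intro mult_right_mono mult_left_mono) auto
  finally have "(1 - s ^ N) * norm (?H t' (u - v)) \<le> L / real N * norm v" by simp
  moreover have "(1/2) * norm (?H t' (u - v)) \<le> (1 - s ^ N) * norm (?H t' (u - v))"
    using \<theta> by (intro mult_right_mono) auto
  ultimately have near: "norm (?H t' (u - v)) \<le> 2 * (L / real N * norm v)" by linarith
  have "norm (u - v) \<le> (M + 1) * norm v"
    using norm_triangle_ineq4[of u v] norm_avg_resolvent_le[OF N t, of v]
    by (simp add: u_def algebra_simps)
  hence "norm (?H t (u - v) - ?H t' (u - v)) \<le> L * (1 / real N) * ((M + 1) * norm v)"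
    using norm_avg_resolvent_diff_le[OF N t t', of "u - v"] tt' L_nonneg
    by (smt (verit) mult_mono mult_nonneg_nonneg norm_ge_zero abs_ge_zero)
  hence "norm (?H t (u - v)) \<le> 2 * (L / real N * norm v) + L / real N * ((M + 1) * norm v)"
    using near norm_triangle_ineq[of "?H t (u - v) - ?H t' (u - v)" "?H t' (u - v)"] by simp
  also have "\<dots> = (M + 3) * L / real N * norm v" by (simp add: algebra_simps add_divide_distrib)
  finally have "norm (?H t (u - v)) \<le> (M + 3) * L / real N * norm v" .
  thus ?thesis using bclin_avg_resolvent[OF t] by (simp add: bclin_diff u_def)
qed

definition avg_defect :: "nat \<Rightarrow> real \<Rightarrow> real" where
  "avg_defect N t = onorm (\<lambda>v. v - avg_resolvent N t v)"

lemma bclin_id_minus_avg_resolvent: "0 \<le> t \<Longrightarrow> t \<le> 1 \<Longrightarrow> bclin (\<lambda>v. v - avg_resolvent N t v)"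
  by (intro bclin_diff_fun bclin_ident bclin_avg_resolvent)

lemma avg_defect_quadratic:
  assumes N: "0 < N" and t: "t \<in> {0..1}"
  shows "avg_defect N t \<le> avg_defect N t * avg_defect N t + (M + 3) * L / real N"
proof -
  define D where "D = (\<lambda>v. v - avg_resolvent N t v)"
  have bD: "bclin D" unfolding D_def using t by (intro bclin_id_minus_avg_resolvent) auto
  have "onorm D \<le> onorm D * onorm D + (M + 3) * L / real N"
  proof (rule onorm_bound)
    show "0 \<le> onorm D * onorm D + (M + 3) * L / real N"
      using L_nonneg M_ge_1 by simp
    fix v
    have "D (D v) - D v = avg_resolvent N t (avg_resolvent N t v) - avg_resolvent N t v"
      using bclin_avg_resolvent t by (simp add: D_def bclin_diff)
    moreover have "norm (D v) \<le> norm (D (D v)) + norm (D (D v) - D v)"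
      using norm_triangle_ineq4[of "D (D v)" "D (D v) - D v"] by simp
    ultimately have "norm (D v) \<le> norm (D (D v)) + (M + 3) * L / real N * norm v"
      using avg_resolvent_nearly_idempotent[OF N, of t v] t by auto
    also have "norm (D (D v)) \<le> onorm D * (onorm D * norm v)"
      using bclin_norm_le[OF bD] bclin_onorm_nonneg[OF bD] by (meson mult_left_mono order_trans)
    finally show "norm (D v) \<le> (onorm D * onorm D + (M + 3) * L / real N) * norm v"
      by (simp add: algebra_simps)
  qed
  thus ?thesis by (simp add: avg_defect_def D_def)
qed

lemma lipschitz_avg_defect: "0 < N \<Longrightarrow> L-lipschitz_on {0..1} (avg_defect N)"
proof (rule lipschitz_onI)
  fix t t' :: real assume N: "0 < N" and t: "t \<in> {0..1}" and t': "t' \<in> {0..1}"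
  have "\<bar>avg_defect N t - avg_defect N t'\<bar>
      \<le> onorm (\<lambda>v. (v - avg_resolvent N t v) - (v - avg_resolvent N t' v))"
    unfolding avg_defect_def using t t'
    by (intro abs_onorm_diff_le bclin_bounded_linear bclin_id_minus_avg_resolvent) auto
  also have "\<dots> \<le> L * \<bar>t - t'\<bar>"
  proof (rule onorm_bound)
    fix v
    show "norm ((v - avg_resolvent N t v) - (v - avg_resolvent N t' v)) \<le> L * \<bar>t - t'\<bar> * norm v"
      using norm_avg_resolvent_diff_le[OF N, of t' t v] t t' by (simp add: norm_minus_commute abs_minus_commute)
  qed (use L_nonneg in simp)
  finally show "dist (avg_defect N t) (avg_defect N t') \<le> L * dist t t'" by (simp add: dist_real_def)
qed (rule L_nonneg)

lemma avg_defect_zero: "0 < N \<Longrightarrow> avg_defect N 0 = 0"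
  by (simp add: avg_defect_def avg_resolvent_zero onorm_zero)

lemma funpow_nonexpansive:
  assumes N: "0 < N" and large: "8 * (M + 3) * L \<le> real N"
  shows "norm ((x ^^ N) v) \<le> norm v"
proof -
  have \<delta>: "0 \<le> (M + 3) * L / real N" "(M + 3) * L / real N \<le> 1/8"
    using L_nonneg M_ge_1 large N by (auto simp: field_simps)
  have "avg_defect N 1 \<le> 2 * ((M + 3) * L / real N)"
    using lipschitz_on_continuous_on[OF lipschitz_avg_defect[OF N]] avg_defect_zero[OF N] \<delta>
      avg_defect_quadratic[OF N]
    by (rule continuous_quadratic_gap)
  hence small: "avg_defect N 1 \<le> 1/4" using \<delta>(2) by linarith
  have bD: "bclin (\<lambda>v. v - avg_resolvent N 1 v)" by (rule bclin_id_minus_avg_resolvent) simp_all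
  define w where "w = v - (x ^^ N) v"
  have "avg_resolvent N 1 w = v"
    using avg_resolvent_left_inverse[OF N, of 1 v] by (simp add: w_def)
  hence "(x ^^ N) v = - (w - avg_resolvent N 1 w)" by (simp add: w_def)
  hence "norm ((x ^^ N) v) \<le> avg_defect N 1 * norm w"
    using bclin_norm_le[OF bD, of w] by (simp add: avg_defect_def norm_minus_commute)
  also have "\<dots> \<le> 1/4 * (norm v + norm ((x ^^ N) v))"
    using small norm_triangle_ineq4[of v "(x ^^ N) v"]
      bclin_onorm_nonneg[OF bD]
    by (intro mult_mono) (auto simp: w_def avg_defect_def)
  finally have "3 * norm ((x ^^ N) v) \<le> norm v" by simp
  thus ?thesis using norm_ge_zero[of "(x ^^ N) v"] by linarith
qed

end

lemma (in disc_resolvent) eventually_funpow_nonexpansive: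
  "\<exists>N0. \<forall>N\<ge>N0. \<forall>v. norm ((x ^^ N) v) \<le> norm v"
proof -
  obtain M where "1 \<le> M" "\<forall>\<mu>. cmod \<mu> \<le> 1 \<longrightarrow> onorm (R \<mu>) \<le> M"
    using bounded_onorm_R by blast
  then interpret bounded_disc_resolvent x R M
    by unfold_locales auto
  show ?thesis
  proof (intro exI[of _ "nat \<lceil>8 * (M + 3) * L\<rceil> + 1"] allI impI)
    fix N v assume N: "nat \<lceil>8 * (M + 3) * L\<rceil> + 1 \<le> N"
    hence "nat \<lceil>8 * (M + 3) * L\<rceil> \<le> N" by linarith
    hence "real (nat \<lceil>8 * (M + 3) * L\<rceil>) \<le> real N" by (rule of_nat_mono)
    hence large: "8 * (M + 3) * L \<le> real N" using real_nat_ceiling_ge[of "8 * (M + 3) * L"] by linarith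
    show "norm ((x ^^ N) v) \<le> norm v" by (rule funpow_nonexpansive[OF _ large]) (use N in simp)
  qed
qed

lemma disc_resolvent_scaled_quasinilpotent:
  fixes Q :: "'a::complex_banach \<Rightarrow> 'a"
  assumes bQ: "bclin Q" and qn: "quasinilpotent Q" and r: "0 < r"
  shows "\<exists>R. disc_resolvent (\<lambda>v. complex_of_real (1 / r) *\<^sub>C Q v) R"
proof -
  let ?x = "\<lambda>v. complex_of_real (1 / r) *\<^sub>C Q v"
  have "op_invertible (\<lambda>v. z *\<^sub>C v - Q v)" if "z \<noteq> 0" for z
    using qn that by (auto simp: quasinilpotent_def op_spectrum_def)
  hence "\<forall>z. \<exists>B. z \<noteq> 0 \<longrightarrow> bclin B \<and> (\<forall>v. z *\<^sub>C B v - Q (B v) = v) \<and> (\<forall>v. B (z *\<^sub>C v - Q v) = v)"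
    by (auto simp: op_invertible_def fun_eq_iff)
  then obtain Inv where Inv: "\<And>z. z \<noteq> 0 \<Longrightarrow> bclin (Inv z)"
    "\<And>z v. z \<noteq> 0 \<Longrightarrow> z *\<^sub>C Inv z v - Q (Inv z v) = v"
    "\<And>z v. z \<noteq> 0 \<Longrightarrow> Inv z (z *\<^sub>C v - Q v) = v"
    by metis
  define R :: "complex \<Rightarrow> 'a \<Rightarrow> 'a" where
    "R \<mu> = (if \<mu> = 0 then (\<lambda>v. v) else (\<lambda>w. Inv (r / \<mu>) ((r / \<mu>) *\<^sub>C w)))" for \<mu> :: complex
  have factor: "v - \<mu> *\<^sub>C ?x v = (\<mu> / r) *\<^sub>C ((r / \<mu>) *\<^sub>C v - Q v)" if "\<mu> \<noteq> 0" for \<mu> :: complex and v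
    using that r by (simp add: scaleC_diff_right scaleC_scaleC)
  have "disc_resolvent ?x R"
  proof
    show "bclin ?x" by (rule bclin_scaleC_fun[OF bQ])
    fix \<mu> :: complex and v
    show "bclin (R \<mu>)"
      using Inv(1)[of "r / \<mu>"] r
      by (auto simp: R_def bclin_ident intro: bclin_compose bclin_scaleC_fun[OF bclin_ident])
    show "R \<mu> v - \<mu> *\<^sub>C ?x (R \<mu> v) = v"
    proof (cases "\<mu> = 0")
      case False
      define z where "z = complex_of_real r / \<mu>"
      have z: "z \<noteq> 0" using r False by (simp add: z_def)
      have "R \<mu> v - \<mu> *\<^sub>C ?x (R \<mu> v) = (\<mu> / r) *\<^sub>C (z *\<^sub>C R \<mu> v - Q (R \<mu> v))"
        using factor[OF False] by (simp add: z_def)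
      also have "z *\<^sub>C R \<mu> v - Q (R \<mu> v) = z *\<^sub>C v"
        using Inv(2)[OF z] False by (simp add: R_def z_def)
      finally show ?thesis using False r by (simp add: scaleC_scaleC z_def)
    qed (simp add: R_def)
    show "R \<mu> (v - \<mu> *\<^sub>C ?x v) = v"
    proof (cases "\<mu> = 0")
      case False
      define z where "z = complex_of_real r / \<mu>"
      have z: "z \<noteq> 0" using r False by (simp add: z_def)
      have "z *\<^sub>C (\<mu> / r) *\<^sub>C (z *\<^sub>C v - Q v) = z *\<^sub>C v - Q v"
        using False r by (simp add: scaleC_scaleC z_def)
      thus ?thesis unfolding factor[OF False] using Inv(3)[OF z] False by (simp add: R_def z_def)
    qed (simp add: R_def)
  qed
  thus ?thesis by blast
qed

lemma quasinilpotent_power_decay: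
  assumes bQ: "bclin Q" and qn: "quasinilpotent Q" and r: "0 < r"
  shows "\<exists>N0. \<forall>N\<ge>N0. \<forall>v. norm ((Q ^^ N) v) \<le> r ^ N * norm v"
proof -
  let ?x = "\<lambda>v. complex_of_real (1 / r) *\<^sub>C Q v"
  obtain R where "disc_resolvent ?x R"
    using disc_resolvent_scaled_quasinilpotent[OF assms] by blast
  then obtain N0 where N0: "\<And>N v. N0 \<le> N \<Longrightarrow> norm ((?x ^^ N) v) \<le> norm v"
    using disc_resolvent.eventually_funpow_nonexpansive by blast
  have "(?x ^^ n) v = complex_of_real ((1 / r) ^ n) *\<^sub>C (Q ^^ n) v" for n v
    by (induction n) (use bQ in \<open>simp_all add: bclin_scaleC scaleC_scaleC mult.commute\<close>)
  hence "norm ((?x ^^ n) v) = norm ((Q ^^ n) v) / r ^ n" for n v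
    using r by (simp add: norm_scaleC norm_divide norm_power power_one_over)
  with N0 r show ?thesis by (auto simp: divide_le_eq mult.commute)
qed

section \<open>The quasinilpotent part and the analytical core\<close>

lemma quasinilpotent_part_iff:
  "v \<in> quasinilpotent_part A \<longleftrightarrow> (\<forall>r>0. \<exists>N. \<forall>n\<ge>N. norm ((A ^^ n) v) \<le> r ^ n)"
proof
  assume "v \<in> quasinilpotent_part A"
  hence lim: "(\<lambda>n. norm ((A ^^ n) v) powr (1 / real n)) \<longlonglongrightarrow> 0"
    by (simp add: quasinilpotent_part_def)
  show "\<forall>r>0. \<exists>N. \<forall>n\<ge>N. norm ((A ^^ n) v) \<le> r ^ n"
  proof (intro allI impI)
    fix r :: real assume r: "0 < r"
    obtain N where N: "\<forall>n\<ge>N. norm ((A ^^ n) v) powr (1 / real n) < r"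
      using lim r unfolding LIMSEQ_iff by auto
    have "norm ((A ^^ n) v) \<le> r ^ n" if n: "N + 1 \<le> n" for n
    proof (cases "(A ^^ n) v = 0")
      case False
      have "norm ((A ^^ n) v) = (norm ((A ^^ n) v) powr (1 / real n)) ^ n"
        using False n by (simp add: powr_realpow[symmetric] powr_powr)
      also have "\<dots> \<le> r ^ n"
        using N[rule_format, of n] n False by (intro power_mono less_imp_le) simp_all
      finally show ?thesis .
    qed (use r in simp)
    thus "\<exists>N. \<forall>n\<ge>N. norm ((A ^^ n) v) \<le> r ^ n" by blast
  qed
next
  assume H: "\<forall>r>0. \<exists>N. \<forall>n\<ge>N. norm ((A ^^ n) v) \<le> r ^ n"
  show "v \<in> quasinilpotent_part A"
    unfolding quasinilpotent_part_def mem_Collect_eq LIMSEQ_iff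
  proof (intro allI impI)
    fix e :: real assume e: "0 < e"
    obtain N where N: "\<forall>n\<ge>N. norm ((A ^^ n) v) \<le> (e/2) ^ n" using H e by (meson half_gt_zero)
    have "norm ((A ^^ n) v) powr (1 / real n) < e" if n: "N + 1 \<le> n" for n
    proof -
      have "norm ((A ^^ n) v) powr (1 / real n) \<le> ((e/2) ^ n) powr (1 / real n)"
        using N n by (intro powr_mono2) auto
      also have "\<dots> = e / 2" using e n by (simp add: powr_realpow[symmetric] powr_powr)
      finally show ?thesis using e by simp
    qed
    thus "\<exists>N. \<forall>n\<ge>N. norm (norm ((A ^^ n) v) powr (1 / real n) - 0) < e" by auto
  qed
qed

lemma quasinilpotent_partI_bound:
  assumes "\<forall>r>0. \<exists>N. \<forall>n\<ge>N. norm ((A ^^ n) v) \<le> K * r ^ n"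
  shows "v \<in> quasinilpotent_part A"
  unfolding quasinilpotent_part_iff
proof (intro allI impI)
  fix r :: real assume r: "0 < r"
  obtain N where N: "\<forall>n\<ge>N. norm ((A ^^ n) v) \<le> K * (r/2) ^ n" using assms r by (meson half_gt_zero)
  obtain m where m: "K < 2 ^ m" using real_arch_pow[of 2 K] by auto
  have "norm ((A ^^ n) v) \<le> r ^ n" if n: "max N m \<le> n" for n
  proof -
    have "K \<le> 2 ^ n" using m n by (meson less_le_trans max.boundedE one_le_numeral power_increasing less_imp_le)
    hence "K * (r/2) ^ n \<le> 2 ^ n * (r/2) ^ n" using r by (intro mult_right_mono) auto
    also have "\<dots> = r ^ n" by (simp add: power_mult_distrib[symmetric])
    finally show ?thesis using N n by force
  qed
  thus "\<exists>N. \<forall>n\<ge>N. norm ((A ^^ n) v) \<le> r ^ n" by blast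
qed

lemma quasinilpotent_part_apply_iff:
  "A v \<in> quasinilpotent_part A \<longleftrightarrow> v \<in> quasinilpotent_part A"
proof
  assume Av: "A v \<in> quasinilpotent_part A"
  show "v \<in> quasinilpotent_part A" unfolding quasinilpotent_part_iff
  proof (intro allI impI)
    fix r :: real assume r: "0 < r"
    define r' where "r' = min r 1"
    have r': "0 < r'" "r' \<le> 1" "r' \<le> r" using r by (auto simp: r'_def)
    obtain N where N: "\<forall>n\<ge>N. norm ((A ^^ n) (A v)) \<le> (r' * r') ^ n"
      using Av r' unfolding quasinilpotent_part_iff by (meson mult_pos_pos)
    have "norm ((A ^^ Suc n) v) \<le> r ^ Suc n" if "N + 1 \<le> n" for n
    proof -
      have "norm ((A ^^ Suc n) v) \<le> (r' * r') ^ n"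
        using N that by (simp add: funpow_Suc_right del: funpow.simps)
      also have "\<dots> = r' ^ (n + n)" by (simp add: power_mult_distrib power_add)
      also have "\<dots> \<le> r' ^ Suc n" using r' that by (intro power_decreasing) auto
      also have "\<dots> \<le> r ^ Suc n" using r' by (intro power_mono) auto
      finally show ?thesis .
    qed
    moreover have "\<exists>n. m = Suc n \<and> N + 1 \<le> n" if "N + 2 \<le> m" for m
      using that by (cases m) auto
    ultimately show "\<exists>N. \<forall>n\<ge>N. norm ((A ^^ n) v) \<le> r ^ n" by blast
  qed
next
  assume v: "v \<in> quasinilpotent_part A"
  show "A v \<in> quasinilpotent_part A" unfolding quasinilpotent_part_iff
  proof (intro allI impI)
    fix r :: real assume r: "0 < r"
    obtain N where N: "\<forall>n\<ge>N. norm ((A ^^ n) v) \<le> (min r 1) ^ n"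
      using v r unfolding quasinilpotent_part_iff by (metis min_less_iff_conj zero_less_one)
    have "norm ((A ^^ n) (A v)) \<le> r ^ n" if n: "N \<le> n" for n
    proof -
      have "norm ((A ^^ n) (A v)) = norm ((A ^^ Suc n) v)" by (simp only: funpow_Suc_right o_apply)
      also have "\<dots> \<le> (min r 1) ^ Suc n" using N[rule_format, of "Suc n"] n by linarith
      also have "\<dots> \<le> (min r 1) ^ n" using r by (intro power_decreasing) auto
      also have "\<dots> \<le> r ^ n" using r by (intro power_mono) auto
      finally show ?thesis .
    qed
    thus "\<exists>N. \<forall>n\<ge>N. norm ((A ^^ n) (A v)) \<le> r ^ n" by blast
  qed
qed

lemma eigenvector_in_quasinilpotent_part:
  assumes bA: "bclin A" and eigen: "A v = z *\<^sub>C v" and z: "z \<noteq> 0"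
    and v: "v \<in> quasinilpotent_part A"
  shows "v = 0"
proof -
  have pw: "(A ^^ n) v = z ^ n *\<^sub>C v" for n
    by (induction n) (use bA eigen in \<open>simp_all add: bclin_scaleC scaleC_scaleC mult.commute\<close>)
  have "0 < cmod z / 2" using z by simp
  then obtain N where N: "\<forall>n\<ge>N. norm ((A ^^ n) v) \<le> (cmod z / 2) ^ n"
    using v unfolding quasinilpotent_part_iff by blast
  have "norm v \<le> 1 * (1/2) ^ n" if "N \<le> n" for n
  proof -
    have "cmod z ^ n * norm v \<le> cmod z ^ n * (1/2) ^ n"
      using N that by (simp add: pw norm_scaleC norm_power power_divide)
    thus ?thesis using z by simp
  qed
  hence "norm v \<le> 0" by (intro nonpos_if_eventually_le_half_power[of N]) blast
  thus ?thesis by simp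
qed

lemma analytical_coreI_bound:
  assumes bA: "bclin A" and u: "u 0 = x" "\<And>n. A (u (Suc n)) = u n" and c: "0 < c"
    and bound: "\<And>n. norm (u n) \<le> c ^ n * K"
  shows "x \<in> analytical_core A"
proof (cases "x = 0")
  case True
  show ?thesis unfolding analytical_core_def
    by (intro CollectI exI[of _ "\<lambda>n. 0"] exI[of _ 1]) (simp add: True bclin_zero[OF bA])
next
  case False
  define m where "m = max 1 (K / norm x)"
  have m: "1 \<le> m" "K \<le> m * norm x" using False by (auto simp: m_def field_simps max_def)
  have "norm (u n) \<le> (c * m) ^ n * norm x" for n
  proof (cases n)
    case (Suc k)
    have "norm (u n) \<le> c ^ n * (m * norm x)" using bound[of n] m c by (smt (verit) mult_left_mono zero_le_power)
    also have "m \<le> m ^ n"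
      using m Suc by (metis One_nat_def Suc_le_eq power_increasing power_one_right zero_less_Suc)
    hence "c ^ n * (m * norm x) \<le> c ^ n * (m ^ n * norm x)"
      using c by (intro mult_left_mono mult_right_mono) auto
    finally show ?thesis by (simp add: power_mult_distrib)
  qed (use u in simp)
  thus ?thesis unfolding analytical_core_def
    using u c m by (intro CollectI exI[of _ u] exI[of _ "c * m"] conjI allI) auto
qed

lemma analytical_core_image:
  assumes bA: "bclin A" and x: "x \<in> analytical_core A"
  shows "A x \<in> analytical_core A"
proof -
  obtain u c where c: "0 < c" and u: "u 0 = x" "\<forall>n. A (u (Suc n)) = u n"
    and bound: "\<forall>n. norm (u n) \<le> c ^ n * norm x"
    using x unfolding analytical_core_def by blast
  define u' where "u' n = (case n of 0 \<Rightarrow> A x | Suc m \<Rightarrow> u m)" for n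
  show ?thesis
  proof (rule analytical_coreI_bound[OF bA, of u' _ c "max (norm (A x)) (norm x / c)"])
    fix n
    show "norm (u' n) \<le> c ^ n * max (norm (A x)) (norm x / c)"
    proof (cases n)
      case (Suc m)
      have "norm (u' n) \<le> c ^ m * norm x" using bound Suc by (simp add: u'_def)
      also have "\<dots> = c ^ n * (norm x / c)" using c Suc by simp
      also have "\<dots> \<le> c ^ n * max (norm (A x)) (norm x / c)" using c by (intro mult_left_mono) auto
      finally show ?thesis .
    qed (simp add: u'_def)
  qed (use u c in \<open>auto simp: u'_def split: nat.split\<close>)
qed

section \<open>Koliha--Drazin inverses\<close>

lemma KD_inverseD:
  assumes "KD_inverse A C"
  shows "bclin C" "C (A (C x)) = C x" "A (C x) = C (A x)"
    and "quasinilpotent (\<lambda>x. A (x - A (C x)))"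
  using assms unfolding KD_inverse_def fun_eq_iff comp_def by auto

lemma range_KD_subset_analytical_core:
  assumes bA: "bclin A" and kd: "KD_inverse A C"
  shows "range (A \<circ> C) \<subseteq> analytical_core A"
proof
  fix x assume "x \<in> range (A \<circ> C)"
  then obtain w where "x = A (C w)" by auto
  hence fixed: "A (C x) = x" using KD_inverseD(2)[OF kd] by simp
  have "A (C ((C ^^ n) x)) = (C ^^ n) x" for n
    using fixed funpow_commute[of "\<lambda>v. A (C v)" C n x] KD_inverseD(2,3)[OF kd] by simp
  thus "x \<in> analytical_core A"
    using norm_funpow_le_max_onorm[OF KD_inverseD(1)[OF kd]]
    by (intro analytical_coreI_bound[OF bA, of "\<lambda>n. (C ^^ n) x" x "max (onorm C) 1" "norm x"]) auto
qed

lemma quasinilpotent_backward_orbit_zero: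
  assumes bQ: "bclin Q" and qn: "quasinilpotent Q" and c: "0 < c"
    and orbit: "\<And>n. y = (Q ^^ n) (w n)" and bound: "\<And>n. norm (w n) \<le> K * c ^ n"
  shows "y = 0"
proof -
  have "0 < 1 / (2 * c)" using c by simp
  then obtain N0 where N0: "\<forall>N\<ge>N0. \<forall>v. norm ((Q ^^ N) v) \<le> (1 / (2 * c)) ^ N * norm v"
    using quasinilpotent_power_decay[OF bQ qn] by blast
  have "norm y \<le> K * (1/2) ^ n" if "N0 \<le> n" for n
  proof -
    have "norm y \<le> (1 / (2 * c)) ^ n * norm (w n)" using N0 that orbit[of n] by simp
    also have "\<dots> \<le> (1 / (2 * c)) ^ n * (K * c ^ n)" using bound c by (intro mult_left_mono) auto
    also have "\<dots> = K * ((1 / (2 * c)) ^ n * c ^ n)" by (simp add: algebra_simps)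
    also have "(1 / (2 * c)) ^ n * c ^ n = (1/2) ^ n"
      using c by (simp add: power_mult_distrib[symmetric])
    finally show ?thesis .
  qed
  hence "norm y \<le> 0" by (intro nonpos_if_eventually_le_half_power[of N0]) blast
  thus ?thesis by simp
qed

text \<open>With \<open>P = I - A C\<close>, backward orbits of \<open>A\<close> through \<open>K(A)\<close> become backward orbits of the
  quasinilpotent operator \<open>A P\<close> with geometric growth, which forces \<open>P x = 0\<close>.\<close>

lemma analytical_core_subset_range_KD:
  assumes bA: "bclin A" and kd: "KD_inverse A C"
  shows "analytical_core A \<subseteq> range (A \<circ> C)"
proof
  fix x assume "x \<in> analytical_core A"
  then obtain u c where c: "0 < c" and u: "u 0 = x" "\<forall>n. A (u (Suc n)) = u n"
    and bound: "\<forall>n. norm (u n) \<le> c ^ n * norm x"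
    unfolding analytical_core_def by blast
  note C = KD_inverseD[OF kd]
  define P where "P v = v - A (C v)" for v
  define Q where "Q v = A (P v)" for v
  have bP: "bclin P" unfolding P_def[abs_def]
    by (intro bclin_diff_fun bclin_ident bclin_compose[OF bA C(1)])
  have bQ: "bclin Q" unfolding Q_def[abs_def] by (rule bclin_compose[OF bA bP])
  have qn: "quasinilpotent Q" using C(4) by (simp add: Q_def[abs_def] P_def)
  have PA: "P (A v) = A (P v)" for v
    using bA by (simp add: P_def bclin_diff C(3))
  have PP: "P (P v) = P v" for v
    using bA C(1) by (simp add: P_def bclin_diff bclin_zero C(2))
  have orbit: "P x = (Q ^^ n) (P (u n))" for n
  proof (induction n)
    case (Suc n)
    have "Q (P (u (Suc n))) = P (u n)" using u by (simp add: Q_def PP PA[symmetric])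
    with Suc show ?case by (simp only: funpow_Suc_right o_apply)
  qed (simp add: u)
  have "norm (P (u n)) \<le> (onorm P * norm x) * c ^ n" for n
  proof -
    have "norm (P (u n)) \<le> onorm P * norm (u n)" by (rule bclin_norm_le[OF bP])
    also have "\<dots> \<le> onorm P * (c ^ n * norm x)"
      using bound bclin_onorm_nonneg[OF bP] by (intro mult_left_mono) auto
    finally show ?thesis by (simp add: algebra_simps)
  qed
  hence "P x = 0" by (rule quasinilpotent_backward_orbit_zero[OF bQ qn c orbit])
  hence "x = A (C x)" by (simp add: P_def)
  thus "x \<in> range (A \<circ> C)" by (metis comp_apply rangeI)
qed

lemma kernel_KD_subset_quasinilpotent_part:
  assumes bA: "bclin A" and kd: "KD_inverse A C" and x: "A (C x) = 0"
  shows "x \<in> quasinilpotent_part A"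
proof -
  note C = KD_inverseD[OF kd]
  define Q where "Q v = A (v - A (C v))" for v
  have bQ: "bclin Q" unfolding Q_def[abs_def]
    by (intro bclin_compose[OF bA] bclin_diff_fun bclin_ident bclin_compose[OF bA C(1)])
  have qn: "quasinilpotent Q" using C(4) by (simp add: Q_def[abs_def])
  have orbit: "(Q ^^ n) x = (A ^^ n) x \<and> A (C ((A ^^ n) x)) = 0" for n
  proof (induction n)
    case (Suc n)
    thus ?case using bA C(3) by (simp add: Q_def bclin_zero)
  qed (simp add: x)
  have "\<exists>N. \<forall>n\<ge>N. norm ((A ^^ n) x) \<le> norm x * r ^ n" if r: "0 < r" for r
  proof -
    obtain N where "\<forall>n\<ge>N. \<forall>v. norm ((Q ^^ n) v) \<le> r ^ n * norm v"
      using quasinilpotent_power_decay[OF bQ qn r] by blast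
    hence "\<forall>n\<ge>N. norm ((A ^^ n) x) \<le> r ^ n * norm x"
      by (simp add: orbit[THEN conjunct1, symmetric])
    thus ?thesis by (auto simp: mult.commute)
  qed
  thus ?thesis by (intro quasinilpotent_partI_bound) blast
qed

lemma quasinilpotent_part_subset_kernel_KD:
  assumes bA: "bclin A" and kd: "KD_inverse A C" and x: "x \<in> quasinilpotent_part A"
  shows "A (C x) = 0"
proof -
  note C = KD_inverseD[OF kd]
  define c where "c = max (onorm C) 1"
  have c: "0 < c" by (simp add: c_def)
  have AC_funpow: "A (C y) = (C ^^ Suc n) ((A ^^ Suc n) y)" for n y
  proof (induction n arbitrary: y)
    case (Suc n)
    have "A (C y) = A (C (A (C y)))" by (simp add: C(2))
    also have "\<dots> = (C ^^ Suc n) ((A ^^ Suc n) (A (C y)))" by (rule Suc)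
    also have "(A ^^ Suc n) (A (C y)) = A (C ((A ^^ Suc n) y))"
      by (rule funpow_commute[symmetric]) (simp add: C(3))
    also have "\<dots> = C ((A ^^ Suc (Suc n)) y)" by (simp add: C(3))
    finally show ?case by (simp only: funpow_Suc_right o_apply)
  qed (simp add: C(3))
  have "0 < 1 / (2 * c)" using c by simp
  then obtain N where N: "\<forall>n\<ge>N. norm ((A ^^ n) x) \<le> (1 / (2 * c)) ^ n"
    using x unfolding quasinilpotent_part_iff by blast
  have "norm (A (C x)) \<le> 1 * (1/2) ^ n" if "N \<le> n" for n
  proof -
    have "norm (A (C x)) \<le> c ^ Suc n * norm ((A ^^ Suc n) x)"
      unfolding AC_funpow[of x n] c_def by (rule norm_funpow_le_max_onorm[OF C(1)])
    also have "\<dots> \<le> c ^ Suc n * (1 / (2 * c)) ^ Suc n"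
      using that c by (intro mult_left_mono N[rule_format]) auto
    also have "\<dots> = (1/2) ^ Suc n" using c by (simp add: power_mult_distrib[symmetric])
    also have "\<dots> \<le> 1 * (1/2) ^ n" by (simp add: power_le_one)
    finally show ?thesis .
  qed
  hence "norm (A (C x)) \<le> 0" by (intro nonpos_if_eventually_le_half_power[of N]) blast
  thus ?thesis by simp
qed

lemma range_KD_inverse:
  "bclin A \<Longrightarrow> KD_inverse A C \<Longrightarrow> range (A \<circ> C) = analytical_core A"
  by (intro equalityI range_KD_subset_analytical_core analytical_core_subset_range_KD)

lemma kernel_KD_inverse:
  "bclin A \<Longrightarrow> KD_inverse A C \<Longrightarrow> {x. (A \<circ> C) x = 0} = quasinilpotent_part A"
  using kernel_KD_subset_quasinilpotent_part quasinilpotent_part_subset_kernel_KD by fastforce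

lemma mary_inverse_along_KD_inverse:
  assumes bA: "bclin A" and kd: "KD_inverse A C"
  shows "mary_inverse_along A (A \<circ> C) C"
proof -
  note C = KD_inverseD[OF kd]
  have "C = A \<circ> C \<circ> C" "C = C \<circ> (A \<circ> C)" "A \<circ> C = C \<circ> A"
    using C(2,3) by (auto simp: fun_eq_iff)
  thus ?thesis using C(1) bA kd unfolding mary_inverse_along_def KD_inverse_def
    by (intro conjI exI[of _ C] exI[of _ A]) auto
qed

lemma KD_inverse_unique:
  assumes bA: "bclin A" and kd: "KD_inverse A C" and kd': "KD_inverse A C'"
  shows "C = C'"
proof
  fix x
  note C = KD_inverseD[OF kd] and C' = KD_inverseD[OF kd']
  have "range (\<lambda>v. A (C v)) \<subseteq> range (\<lambda>v. A (C' v))"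
    using range_KD_inverse[OF bA kd] range_KD_inverse[OF bA kd'] by (simp add: comp_def)
  moreover have "A (C v) = 0 \<longleftrightarrow> A (C' v) = 0" for v
    using kernel_KD_inverse[OF bA kd] kernel_KD_inverse[OF bA kd'] by (simp add: set_eq_iff)
  ultimately have E: "A (C v) = A (C' v)" for v
    using C(1) C'(1) bA C(2) C'(2)
    by (intro idempotents_eqI[where E="\<lambda>v. A (C v)" and F="\<lambda>v. A (C' v)"])
       (auto intro: bclin_bounded_linear bclin_compose bounded_linear.linear)
  have "C x = C (A (C x))" by (simp add: C(2))
  also have "\<dots> = C (A (C' x))" by (simp add: E)
  also have "\<dots> = A (C (C' x))" by (simp add: C(3))
  also have "\<dots> = A (C' (C' x))" by (simp add: E)
  also have "\<dots> = C' (A (C' x))" by (rule C'(3))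
  also have "\<dots> = C' x" by (rule C'(2))
  finally show "C x = C' x" .
qed

section \<open>Mary inverses along operators with range \<open>K(A)\<close> and kernel \<open>H\<^sub>0(A)\<close>\<close>

lemma uniform_power_bound_on_quasinilpotent_part:
  assumes bA: "bclin A" and bP: "bclin P" and PH: "\<And>v. P v \<in> quasinilpotent_part A" and \<rho>: "0 < \<rho>"
  obtains K where "\<And>n v. norm ((A ^^ n) (P v)) \<le> K * \<rho> ^ n * norm v"
proof -
  let ?T = "\<lambda>n v. (1 / \<rho>) ^ n *\<^sub>R (A ^^ n) (P v)"
  have "\<exists>K. \<forall>n. norm (?T n v) \<le> K" for v
  proof -
    obtain N where N: "\<forall>n\<ge>N. norm ((A ^^ n) (P v)) \<le> \<rho> ^ n"
      using PH[of v] \<rho> unfolding quasinilpotent_part_iff by blast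
    have "norm (?T n v) \<le> (\<Sum>m<N. norm (?T m v)) + 1" for n
    proof (cases "n < N")
      case True
      thus ?thesis using member_le_sum[of n "{..<N}" "\<lambda>m. norm (?T m v)"] by simp
    next
      case False
      hence "norm (?T n v) \<le> (1 / \<rho>) ^ n * \<rho> ^ n"
        using N \<rho> by (simp add: mult_left_mono)
      also have "\<dots> = 1" using \<rho> by (simp add: power_mult_distrib[symmetric])
      finally show ?thesis by (simp add: sum_nonneg add_increasing)
    qed
    thus ?thesis by blast
  qed
  moreover have "bounded_linear (?T n)" for n
    by (intro bclin_bounded_linear bclin_scaleR_fun bclin_compose[OF bclin_funpow[OF bA] bP])
  ultimately obtain K where K: "\<And>n v. norm (?T n v) \<le> K * norm v"
    using uniform_boundedness[of ?T] by blast
  have "norm ((A ^^ n) (P v)) \<le> K * \<rho> ^ n * norm v" for n v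
  proof -
    have "(1 / \<rho>) ^ n * norm ((A ^^ n) (P v)) \<le> K * norm v" using K[of n v] \<rho> by simp
    hence "\<rho> ^ n * ((1 / \<rho>) ^ n * norm ((A ^^ n) (P v))) \<le> \<rho> ^ n * (K * norm v)"
      using \<rho> by (intro mult_left_mono) auto
    thus ?thesis using \<rho> by (simp add: power_one_over field_simps)
  qed
  thus thesis by (rule that)
qed

lemma bclin_suminf_geometric:
  fixes F :: "nat \<Rightarrow> 'a::complex_banach \<Rightarrow> 'a"
  assumes bF: "\<And>n. bclin (F n)" and bound: "\<And>n y. norm (F n y) \<le> K * norm y * (1/2) ^ n"
  shows "summable (\<lambda>n. F n y)" and "bclin (\<lambda>y. \<Sum>n. F n y)"
proof -
  have summable_bound: "summable (\<lambda>n. K * norm y * (1/2::real) ^ n)" for y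
    by (intro summable_mult summable_geometric) simp
  have summable_norms: "summable (\<lambda>n. norm (F n y))" for y
    by (rule summable_comparison_test[OF _ summable_bound]) (use bound in auto)
  hence summable: "summable (\<lambda>n. F n y)" for y by (rule summable_norm_cancel)
  thus "summable (\<lambda>n. F n y)" .
  have "norm (\<Sum>n. F n y) \<le> norm y * (2 * K)" for y
  proof -
    have "norm (\<Sum>n. F n y) \<le> (\<Sum>n. K * norm y * (1/2::real) ^ n)"
      using bound summable_bound summable_norms
      by (intro order_trans[OF summable_norm[OF summable_norms] suminf_le]) auto
    also have "\<dots> = norm y * (2 * K)"
      using suminf_geometric[of "1/2::real"] by (simp add: suminf_mult)
    finally show ?thesis .
  qed
  thus "bclin (\<lambda>y. \<Sum>n. F n y)"
    unfolding bclin_def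
    using summable bF suminf_add[OF summable summable] suminf_scaleR_right[OF summable]
      bounded_linear.suminf[OF bounded_linear_scaleC summable]
    by (intro conjI allI bounded_linear_intro[where K="2 * K"])
       (simp_all add: bclin_add bclin_scaleR bclin_scaleC)
qed

text \<open>On the range of \<open>P\<close> the powers of \<open>A\<close> decay like \<open>(\<bar>z\<bar>/2)\<^sup>n\<close>, so the Neumann series
  \<open>\<Sum>\<^sub>n z\<^sup>-\<^sup>n\<^sup>-\<^sup>1 A\<^sup>n P\<close> converges and inverts \<open>z - A\<close> there.\<close>

lemma neumann_series_on_projection:
  assumes bA: "bclin A" and bP: "bclin P" and PP: "\<And>v. P (P v) = P v" and PA: "\<And>v. P (A v) = A (P v)"
    and z: "z \<noteq> 0" and bound: "\<And>n v. norm ((A ^^ n) (P v)) \<le> K * (cmod z / 2) ^ n * norm v"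
  obtains G where "bclin G" "\<And>y. z *\<^sub>C G y - A (G y) = P y" "\<And>y. P (G y) = G y"
proof -
  define g where "g y n = inverse z ^ n *\<^sub>C (A ^^ n) (P y)" for y n
  have "norm (g y n) \<le> K * norm y * (1/2) ^ n" for y n
  proof -
    have "norm (g y n) = (1 / cmod z) ^ n * norm ((A ^^ n) (P y))"
      by (simp add: g_def norm_scaleC norm_power norm_inverse power_one_over divide_inverse)
    also have "\<dots> \<le> (1 / cmod z) ^ n * (K * (cmod z / 2) ^ n * norm y)"
      by (intro mult_left_mono bound) simp
    also have "\<dots> = K * norm y * (1/2) ^ n"
      using z by (simp add: power_divide power_one_over field_simps)
    finally show ?thesis .
  qed
  moreover have "bclin (\<lambda>y. g y n)" for n unfolding g_def
    by (intro bclin_scaleC_fun bclin_compose[OF bclin_funpow[OF bA] bP])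
  ultimately have summable: "summable (g y)" and bS: "bclin (\<lambda>y. \<Sum>n. g y n)" for y
    using bclin_suminf_geometric[of "\<lambda>n y. g y n" K] by auto
  define G where "G y = inverse z *\<^sub>C (\<Sum>n. g y n)" for y
  have "bclin G" unfolding G_def[abs_def] by (rule bclin_scaleC_fun[OF bS])
  moreover have "z *\<^sub>C G y - A (G y) = P y" for y
  proof -
    have bAz: "bclin (\<lambda>v. A (inverse z *\<^sub>C v))"
      by (intro bclin_compose[OF bA] bclin_scaleC_fun bclin_ident)
    have "(\<lambda>n. g y n - A (inverse z *\<^sub>C g y n)) sums ((\<Sum>n. g y n) - A (inverse z *\<^sub>C (\<Sum>n. g y n)))"
      using summable by (intro sums_diff summable_sums bounded_linear.sums[OF bclin_bounded_linear[OF bAz]])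
    moreover have "A (inverse z *\<^sub>C g y n) = g y (Suc n)" for n
      using bA by (simp add: g_def bclin_scaleC scaleC_scaleC mult.commute)
    moreover have "(\<lambda>n. g y n - g y (Suc n)) sums (g y 0 - 0)"
      by (rule telescope_sums'[OF summable_LIMSEQ_zero[OF summable]])
    ultimately show ?thesis using z by (simp add: G_def g_def scaleC_scaleC sums_unique2)
  qed
  moreover have "P (G y) = G y" for y
  proof -
    have "P (g y n) = g y n" for n
      using bP funpow_commute[of P A n "P y", OF PA] by (simp add: g_def bclin_scaleC PP)
    thus ?thesis
      using bounded_linear.suminf[OF bclin_bounded_linear[OF bP] summable] bP
      by (simp add: G_def bclin_scaleC)
  qed
  ultimately show thesis by (rule that)
qed

lemma op_invertible_sub_projection_quasinilpotent:
  assumes bA: "bclin A" and bP: "bclin P" and PP: "\<And>v. P (P v) = P v" and PA: "\<And>v. P (A v) = A (P v)"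
    and PH: "\<And>v. P v \<in> quasinilpotent_part A" and z: "z \<noteq> 0"
  shows "op_invertible (\<lambda>x. z *\<^sub>C x - A (P x))"
proof -
  let ?I = "\<lambda>x. z *\<^sub>C x - A (P x)"
  have "0 < cmod z / 2" using z by simp
  then obtain K where "\<And>n v. norm ((A ^^ n) (P v)) \<le> K * (cmod z / 2) ^ n * norm v"
    using uniform_power_bound_on_quasinilpotent_part[OF bA bP PH] by blast
  then obtain G where bG: "bclin G" and G: "\<And>y. z *\<^sub>C G y - A (G y) = P y" "\<And>y. P (G y) = G y"
    using neumann_series_on_projection[OF bA bP PP PA z] by blast
  define S where "S y = inverse z *\<^sub>C (y - P y) + G y" for y
  have bS: "bclin S" unfolding S_def[abs_def]
    by (intro bclin_add_fun bclin_scaleC_fun bclin_diff_fun bclin_ident bP bG)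
  have bI: "bclin ?I" by (intro bclin_diff_fun bclin_scaleC_fun bclin_ident bclin_compose[OF bA bP])
  have right: "?I (S y) = y" for y
  proof -
    have "P (inverse z *\<^sub>C (y - P y)) = 0" using bP by (simp add: bclin_scaleC bclin_diff PP)
    hence "?I (S y) = (y - P y) + (z *\<^sub>C G y - A (G y))"
      using z bA bP by (simp add: S_def bclin_add bclin_zero scaleC_add_right scaleC_scaleC G(2))
    thus ?thesis by (simp add: G(1))
  qed
  have injective: "x = 0" if "?I x = 0" for x
  proof -
    have "z *\<^sub>C (x - P x) = ?I x - P (?I x)"
      using bP bA by (simp add: bclin_diff bclin_scaleC scaleC_diff_right PA[symmetric] PP)
    hence "z *\<^sub>C (x - P x) = 0" using that bP by (simp add: bclin_zero)
    hence "P x = x" using z by (simp add: scaleC_diff_right)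
      (metis eq_iff_diff_eq_0 scaleC_scaleC left_inverse scaleC_one scaleC_zero_right)
    hence "A x = z *\<^sub>C x" using that by simp
    thus "x = 0" using eigenvector_in_quasinilpotent_part[OF bA _ z] PH[of x] \<open>P x = x\<close> by simp
  qed
  have "S (?I v) = v" for v
  proof -
    have "?I (S (?I v) - v) = ?I (S (?I v)) - ?I v" by (rule bclin_diff[OF bI])
    also have "\<dots> = 0" by (simp only: right diff_self)
    finally show ?thesis using injective[of "S (?I v) - v"] by simp
  qed
  with right bS show ?thesis unfolding op_invertible_def by (intro exI[of _ S]) (simp add: fun_eq_iff)
qed

lemma mary_inverse_alongD:
  assumes "mary_inverse_along A T B"
  shows "bclin B" "B (A (B x)) = B x" "range B = range T" "B v = 0 \<longleftrightarrow> T v = 0"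
proof -
  obtain L U V W where bL: "bclin L" and bV: "bclin V"
    and factors: "\<And>v. B v = T (U v)" "\<And>v. T v = B (W v)" "\<And>v. B v = L (T v)" "\<And>v. T v = V (B v)"
    using assms unfolding mary_inverse_along_def fun_eq_iff comp_apply by blast
  show "range B = range T"
  proof
    show "range B \<subseteq> range T" using factors(1) by (metis image_subsetI rangeI)
    show "range T \<subseteq> range B" using factors(2) by (metis image_subsetI rangeI)
  qed
  show "B v = 0 \<longleftrightarrow> T v = 0"
    using factors(3,4)[of v] bclin_zero[OF bL] bclin_zero[OF bV] by auto
  show "bclin B" using assms unfolding mary_inverse_along_def by blast
  have "B \<circ> A \<circ> B = B" using assms unfolding mary_inverse_along_def by blast
  thus "B (A (B x)) = B x" by (metis comp_apply)
qed

lemma mary_inverse_along_commute: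
  assumes bA: "bclin A" and range_T: "range T = analytical_core A"
    and kernel_T: "{x. T x = 0} = quasinilpotent_part A" and mary: "mary_inverse_along A T B"
  shows "A (B v) = B (A v)"
proof -
  note B = mary_inverse_alongD[OF mary]
  have kernel_B: "B v = 0 \<longleftrightarrow> v \<in> quasinilpotent_part A" for v
    using B(4) kernel_T by blast
  have "A (B v) = 0 \<longleftrightarrow> B (A v) = 0" for v
  proof -
    have "A (B v) = 0 \<longleftrightarrow> B v = 0"
      using B(2)[of v] bclin_zero[OF bA] bclin_zero[OF B(1)] by auto
    thus ?thesis using kernel_B quasinilpotent_part_apply_iff by blast
  qed
  moreover have "range (\<lambda>v. A (B v)) \<subseteq> range (\<lambda>v. B (A v))"
  proof
    fix y assume "y \<in> range (\<lambda>v. A (B v))"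
    hence "y \<in> range B" using analytical_core_image[OF bA] B(3) range_T by auto
    then obtain w where "y = B w" by blast
    hence "y = B (A (B w))" by (simp add: B(2))
    thus "y \<in> range (\<lambda>v. B (A v))" by blast
  qed
  moreover have "linear (\<lambda>v. A (B v))" "linear (\<lambda>v. B (A v))"
    using bA B(1) by (auto intro: bounded_linear.linear bclin_bounded_linear bclin_compose)
  moreover have "A (B (A (B v))) = A (B v)" "B (A (B (A v))) = B (A v)" for v
    by (simp_all add: B(2))
  ultimately show ?thesis by (intro idempotents_eqI[where E="\<lambda>v. A (B v)" and F="\<lambda>v. B (A v)"])
qed

lemma KD_inverse_of_mary_inverse_along:
  assumes bA: "bclin A" and range_T: "range T = analytical_core A"
    and kernel_T: "{x. T x = 0} = quasinilpotent_part A" and mary: "mary_inverse_along A T B"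
  shows "KD_inverse A B"
proof -
  note B = mary_inverse_alongD[OF mary]
  note commute = mary_inverse_along_commute[OF assms]
  define P where "P v = v - A (B v)" for v
  have BP: "B (P v) = 0" for v using B(1) by (simp add: P_def bclin_diff B(2))
  have "op_invertible (\<lambda>x. z *\<^sub>C x - A (P x))" if "z \<noteq> 0" for z
  proof (rule op_invertible_sub_projection_quasinilpotent[OF bA _ _ _ _ that])
    show "bclin P" unfolding P_def[abs_def]
      by (intro bclin_diff_fun bclin_ident bclin_compose[OF bA B(1)])
    show "P (P v) = P v" for v using BP bclin_zero[OF bA] by (simp add: P_def[of "P v"])
    show "P (A v) = A (P v)" for v using bA by (simp add: P_def bclin_diff commute)
    show "P v \<in> quasinilpotent_part A" for v using BP B(4) kernel_T by blast
  qed
  hence "quasinilpotent (\<lambda>x. A (x - A (B x)))"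
    by (auto simp: quasinilpotent_def op_spectrum_def P_def)
  thus ?thesis using B(1,2) commute by (simp add: KD_inverse_def fun_eq_iff)
qed

theorem proposition4p1:
  fixes A :: "'a::complex_banach \<Rightarrow> 'a"
  assumes "bclin A"
  shows "(KD_invertible A \<longleftrightarrow>
           (\<exists>T. bclin T \<and> range T = analytical_core A \<and> {x. T x = 0} = quasinilpotent_part A
              \<and> (\<exists>B. mary_inverse_along A T B)))
       \<and> (\<forall>T B. bclin T \<and> range T = analytical_core A \<and> {x. T x = 0} = quasinilpotent_part A
           \<and> mary_inverse_along A T B \<longrightarrow> KD_invertible A \<and> B = KD_inv A)"
proof (intro conjI allI impI iffI)
  assume "KD_invertible A"
  then obtain C where kd: "KD_inverse A C" by (auto simp: KD_invertible_def)
  show "\<exists>T. bclin T \<and> range T = analytical_core A \<and> {x. T x = 0} = quasinilpotent_part A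
          \<and> (\<exists>B. mary_inverse_along A T B)"
    using bclin_comp[OF assms KD_inverseD(1)[OF kd]] range_KD_inverse[OF assms kd]
      kernel_KD_inverse[OF assms kd] mary_inverse_along_KD_inverse[OF assms kd]
    by blast
next
  assume "\<exists>T. bclin T \<and> range T = analytical_core A \<and> {x. T x = 0} = quasinilpotent_part A
          \<and> (\<exists>B. mary_inverse_along A T B)"
  thus "KD_invertible A"
    using KD_inverse_of_mary_inverse_along[OF assms] by (auto simp: KD_invertible_def)
next
  fix T B
  assume "bclin T \<and> range T = analytical_core A \<and> {x. T x = 0} = quasinilpotent_part A
          \<and> mary_inverse_along A T B"
  hence kd: "KD_inverse A B" using KD_inverse_of_mary_inverse_along[OF assms] by blast
  thus "KD_invertible A" by (auto simp: KD_invertible_def)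
  show "B = KD_inv A"
    unfolding KD_inv_def using kd KD_inverse_unique[OF assms kd] by (metis the_equality)
qed

end
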